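(* If $G$ is a connected locally Ore graph of order $n \ge 4$, then $G$ is $3$-connected.
   Context: A graph $G$ is locally Ore if for every vertex $v \in V(G)$ and every pair $u,w$ of non-adjacent vertices in $N(v)$, $\deg_{\langle N(v)\rangle}(u) + \deg_{\langle N(v)\rangle}(w) \ge \deg_G(v)$, where $N(v)$ is the open neighbourhood of $v$ and $\langle N(v)\rangle$ the subgraph induced by it. *)

theory Defs
  imports Main
begin

definition simple_graph :: "'a set \<Rightarrow> ('a \<Rightarrow> 'a \<Rightarrow> bool) \<Rightarrow> bool" where
  "simple_graph V E \<longleftrightarrow> finite V \<and> (\<forall>u v. E u v \<longrightarrow> u \<in> V \<and> v \<in> V)
     \<and> (\<forall>u v. E u v \<longrightarrow> E v u) \<and> (\<forall>v. \<not> E v v)"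

definition nbhd :: "'a set \<Rightarrow> ('a \<Rightarrow> 'a \<Rightarrow> bool) \<Rightarrow> 'a \<Rightarrow> 'a set" where
  "nbhd V E v = {u \<in> V. E v u}"

definition degree :: "'a set \<Rightarrow> ('a \<Rightarrow> 'a \<Rightarrow> bool) \<Rightarrow> 'a \<Rightarrow> nat" where
  "degree V E v = card (nbhd V E v)"

definition induced_degree :: "'a set \<Rightarrow> ('a \<Rightarrow> 'a \<Rightarrow> bool) \<Rightarrow> 'a \<Rightarrow> nat" where
  "induced_degree S E u = card {w \<in> S. E u w}"

definition locally_ore :: "'a set \<Rightarrow> ('a \<Rightarrow> 'a \<Rightarrow> bool) \<Rightarrow> bool" where
  "locally_ore V E \<longleftrightarrow> (\<forall>v \<in> V. \<forall>u \<in> nbhd V E v. \<forall>w \<in> nbhd V E v.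
      u \<noteq> w \<and> \<not> E u w \<longrightarrow>
      induced_degree (nbhd V E v) E u + induced_degree (nbhd V E v) E w \<ge> degree V E v)"

definition connected_on :: "'a set \<Rightarrow> ('a \<Rightarrow> 'a \<Rightarrow> bool) \<Rightarrow> bool" where
  "connected_on S E \<longleftrightarrow> S \<noteq> {} \<and>
     (\<forall>u \<in> S. \<forall>v \<in> S. (\<lambda>x y. E x y \<and> x \<in> S \<and> y \<in> S)\<^sup>*\<^sup>* u v)"

definition k_connected :: "nat \<Rightarrow> 'a set \<Rightarrow> ('a \<Rightarrow> 'a \<Rightarrow> bool) \<Rightarrow> bool" where
  "k_connected k V E \<longleftrightarrow> card V > k \<and>
     (\<forall>X \<subseteq> V. card X < k \<longrightarrow> connected_on (V - X) E)"

end

theory Submission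
  imports Defs
begin

text \<open>If a vertex x had neighbours a and b on both sides of a separation of G - {x, y}, then
  a and b would be non-adjacent in N(x), and each could only be adjacent in N(x) to its own side
  and to y. Their degrees in N(x) would then sum to at most deg(x) - 1, against the locally Ore
  condition. So every vertex of a separating set of size at most two sees only one side; if
  X = {x1, x2} separates S from T with x1 seeing S and x2 seeing T, then {x2} alone separates
  S \<union> {x1} from T; connectivity of G forces x2 to see S \<union> {x1} as well as T, which
  contradicts one-sidedness once more.\<close>

definition separation :: "'a set \<Rightarrow> ('a \<Rightarrow> 'a \<Rightarrow> bool) \<Rightarrow> 'a set \<Rightarrow> 'a set \<Rightarrow> bool" where
  "separation W E S T \<longleftrightarrow> S \<noteq> {} \<and> T \<noteq> {} \<and> S \<inter> T = {} \<and> S \<union> T = W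
     \<and> (\<forall>s\<in>S. \<forall>t\<in>T. \<not> E s t)"

lemma not_connected_on_separation:
  assumes "W \<noteq> {}" and "\<not> connected_on W E"
  obtains S T where "separation W E S T"
proof -
  define R where "R = (\<lambda>x y. E x y \<and> x \<in> W \<and> y \<in> W)"
  obtain u v where u: "u \<in> W" and v: "v \<in> W" and "\<not> R\<^sup>*\<^sup>* u v"
    using assms unfolding connected_on_def R_def by blast
  define S where "S = {z. R\<^sup>*\<^sup>* u z}"
  have "S \<subseteq> W"
  proof
    fix z assume "z \<in> S"
    then have "R\<^sup>*\<^sup>* u z" by (simp add: S_def)
    then show "z \<in> W" using u by (induction rule: rtranclp_induct) (auto simp: R_def)
  qed
  moreover have "t \<in> S" if "s \<in> S" "t \<in> W" "E s t" for s t
    using that \<open>S \<subseteq> W\<close> rtranclp.rtrancl_into_rtrancl[of R u s t]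
    by (auto simp: S_def R_def)
  moreover have "u \<in> S" "v \<in> W - S" using v \<open>\<not> R\<^sup>*\<^sup>* u v\<close> by (auto simp: S_def)
  ultimately have "separation W E S (W - S)"
    unfolding separation_def by blast
  then show thesis by (rule that)
qed

lemma connected_on_edge_leaving:
  assumes "connected_on W E" "S \<subseteq> W" "s0 \<in> S" "t0 \<in> W - S"
  shows "\<exists>s\<in>S. \<exists>t\<in>W - S. E s t"
proof -
  define R where "R = (\<lambda>x y. E x y \<and> x \<in> W \<and> y \<in> W)"
  have "R\<^sup>*\<^sup>* s0 t0" using assms unfolding connected_on_def R_def by blast
  then have "t0 \<in> S \<or> (\<exists>s\<in>S. \<exists>t\<in>W - S. E s t)"
    by (induction rule: rtranclp_induct) (use assms(3) in \<open>auto simp: R_def\<close>)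
  then show ?thesis using assms(4) by blast
qed

lemma separator_touches_both_sides:
  assumes sg: "simple_graph V E" and con: "connected_on V E"
    and sep: "separation (V - X) E S T"
  shows "\<exists>x\<in>X. \<exists>s\<in>S. E x s" and "\<exists>x\<in>X. \<exists>t\<in>T. E x t"
proof -
  have sym: "E b a" if "E a b" for a b using sg that unfolding simple_graph_def by blast
  have touch: "\<exists>x\<in>X. \<exists>a\<in>A. E x a"
    if A: "A \<subseteq> V - X" "a \<in> A" "b \<in> V - X - A" and no_edge: "\<forall>a\<in>A. \<forall>c\<in>V - X - A. \<not> E a c"
    for A a b
  proof -
    obtain s t where "s \<in> A" "t \<in> V - A" "E s t"
      using connected_on_edge_leaving[OF con, of A a b] A by blast
    moreover from this no_edge have "t \<in> X" by blast
    ultimately show ?thesis using sym by blast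
  qed
  have ST: "S \<subseteq> V - X" "T \<subseteq> V - X" "V - X - S = T" "V - X - T = S"
    and no_edge: "\<forall>s\<in>S. \<forall>t\<in>T. \<not> E s t" and ne: "S \<noteq> {}" "T \<noteq> {}"
    using sep unfolding separation_def by auto
  from ne obtain s t where "s \<in> S" "t \<in> T" by blast
  show "\<exists>x\<in>X. \<exists>s\<in>S. E x s"
    using touch[of S s t] ST no_edge \<open>s \<in> S\<close> \<open>t \<in> T\<close> by simp
  have "\<forall>t\<in>T. \<forall>s\<in>S. \<not> E t s" using no_edge sym by blast
  then show "\<exists>x\<in>X. \<exists>t\<in>T. E x t"
    using touch[of T t s] ST \<open>s \<in> S\<close> \<open>t \<in> T\<close> by simp
qed

lemma induced_degree_one_side:
  assumes "finite N" "a \<in> N \<inter> P" "\<not> E a a" "\<forall>q\<in>Q. \<not> E a q"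
  shows "induced_degree N E a + 1 \<le> card (N \<inter> P) + card (N - P - Q)"
proof -
  have "{w \<in> N. E a w} \<subseteq> (N \<inter> P - {a}) \<union> (N - P - Q)" using assms by auto
  then have "induced_degree N E a \<le> card ((N \<inter> P - {a}) \<union> (N - P - Q))"
    unfolding induced_degree_def by (intro card_mono) (use assms(1) in auto)
  also have "\<dots> \<le> card (N \<inter> P - {a}) + card (N - P - Q)" by (rule card_Un_le)
  moreover have "card (N \<inter> P) > 0" using assms(1,2) by (auto simp: card_gt_0_iff)
  ultimately show ?thesis using assms(2) by (simp add: card_Diff_singleton)
qed

lemma locally_ore_nbhd_one_side:
  assumes sg: "simple_graph V E" and lo: "locally_ore V E" and x: "x \<in> V"
    and cover: "nbhd V E x \<subseteq> P \<union> Q \<union> {y}"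
    and disj: "P \<inter> Q = {}" and no_edge: "\<forall>p\<in>P. \<forall>q\<in>Q. \<not> E p q"
  shows "nbhd V E x \<inter> P = {} \<or> nbhd V E x \<inter> Q = {}"
proof (rule ccontr)
  assume "\<not> ?thesis"
  then obtain a b where a: "a \<in> nbhd V E x \<inter> P" and b: "b \<in> nbhd V E x \<inter> Q" by blast
  define N where "N = nbhd V E x"
  define D where "D = N - P - Q"
  have fin: "finite N" using sg unfolding simple_graph_def N_def nbhd_def by auto
  have irrefl: "\<not> E z z" for z using sg unfolding simple_graph_def by blast
  have sym: "E p q \<Longrightarrow> E q p" for p q using sg unfolding simple_graph_def by blast
  have "card D \<le> 1"
    using cover card_mono[of "{y}" D] by (auto simp: D_def N_def)
  moreover have "card N = card (N \<inter> P) + card (N \<inter> Q) + card D"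
  proof -
    have "N = ((N \<inter> P) \<union> (N \<inter> Q)) \<union> D" by (auto simp: D_def)
    moreover have "card ((N \<inter> P) \<union> (N \<inter> Q) \<union> D) = card ((N \<inter> P) \<union> (N \<inter> Q)) + card D"
      using fin by (intro card_Un_disjoint) (auto simp: D_def)
    moreover have "card ((N \<inter> P) \<union> (N \<inter> Q)) = card (N \<inter> P) + card (N \<inter> Q)"
      using fin disj by (intro card_Un_disjoint) auto
    ultimately show ?thesis by simp
  qed
  moreover have "induced_degree N E a + 1 \<le> card (N \<inter> P) + card D"
    unfolding D_def using a fin irrefl no_edge
    by (intro induced_degree_one_side) (auto simp: N_def)
  moreover have "induced_degree N E b + 1 \<le> card (N \<inter> Q) + card D"
  proof -
    have "N - Q - P = D" by (auto simp: D_def)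
    moreover have "induced_degree N E b + 1 \<le> card (N \<inter> Q) + card (N - Q - P)"
      using b fin irrefl no_edge sym by (intro induced_degree_one_side) (unfold N_def, blast+)
    ultimately show ?thesis by simp
  qed
  moreover have "card N \<le> induced_degree N E a + induced_degree N E b"
  proof -
    have "a \<noteq> b" "\<not> E a b" using a b disj no_edge by auto
    with lo x a b show ?thesis unfolding locally_ore_def degree_def N_def by blast
  qed
  ultimately show False by linarith
qed

lemma separator_vertex_one_sided:
  assumes sg: "simple_graph V E" and lo: "locally_ore V E"
    and sep: "separation (V - X) E S T" and X: "X \<subseteq> {x, y}" "x \<in> X" "X \<subseteq> V"
  shows "(\<forall>s\<in>S. \<not> E x s) \<or> (\<forall>t\<in>T. \<not> E x t)"
proof -
  have ST: "S \<union> T = V - X" "S \<inter> T = {}" "\<forall>s\<in>S. \<forall>t\<in>T. \<not> E s t"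
    using sep unfolding separation_def by auto
  have "nbhd V E x \<subseteq> S \<union> T \<union> {y}"
  proof
    fix z assume z: "z \<in> nbhd V E x"
    then have "z \<noteq> x" using sg unfolding simple_graph_def nbhd_def by auto
    with z X(1) ST(1) show "z \<in> S \<union> T \<union> {y}" unfolding nbhd_def by blast
  qed
  then have "nbhd V E x \<inter> S = {} \<or> nbhd V E x \<inter> T = {}"
    using locally_ore_nbhd_one_side[OF sg lo] X ST(2,3) by blast
  moreover have "S \<subseteq> V" "T \<subseteq> V" using ST(1) by auto
  ultimately show ?thesis unfolding nbhd_def by blast
qed

lemma subset_pair_if_card_le_2:
  assumes "finite X" "card X \<le> 2" "z \<in> X"
  obtains w where "X \<subseteq> {z, w}"
proof -
  have "card (X - {z}) \<le> Suc 0" using assms by (simp add: card_Diff_singleton)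
  then have "\<forall>a\<in>X - {z}. \<forall>b\<in>X - {z}. a = b" using assms(1) by (simp add: card_le_Suc0_iff_eq)
  then show thesis using that by blast
qed

lemma locally_ore_no_separating_pair:
  assumes sg: "simple_graph V E" and con: "connected_on V E" and lo: "locally_ore V E"
    and X: "X \<subseteq> V" "finite X" "card X \<le> 2" and sep: "separation (V - X) E S T"
  shows False
proof -
  obtain x1 s where x1: "x1 \<in> X" "s \<in> S" "E x1 s"
    using separator_touches_both_sides(1)[OF sg con sep] by blast
  obtain x2 t where x2: "x2 \<in> X" "t \<in> T" "E x2 t"
    using separator_touches_both_sides(2)[OF sg con sep] by blast
  obtain y1 where y1: "X \<subseteq> {x1, y1}" using subset_pair_if_card_le_2[OF X(2,3) x1(1)] .
  obtain y2 where y2: "X \<subseteq> {x2, y2}" using subset_pair_if_card_le_2[OF X(2,3) x2(1)] .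
  have x1_only_S: "\<forall>t\<in>T. \<not> E x1 t"
    using separator_vertex_one_sided[OF sg lo sep y1 x1(1) X(1)] x1(2,3) by blast
  have x2_only_T: "\<forall>s\<in>S. \<not> E x2 s"
    using separator_vertex_one_sided[OF sg lo sep y2 x2(1) X(1)] x2(2,3) by blast
  have "x1 \<noteq> x2" using x1_only_S x2(2,3) by blast
  then have X_eq: "X = {x1, x2}" using y1 x1(1) x2(1) by blast
  have sep': "separation (V - {x2}) E (S \<union> {x1}) T"
  proof -
    have ST: "S \<inter> T = {}" "S \<union> T = V - X" "T \<noteq> {}" "\<forall>a\<in>S. \<forall>b\<in>T. \<not> E a b"
      using sep unfolding separation_def by auto
    have "V - {x2} = (V - X) \<union> {x1}" using X_eq X(1) \<open>x1 \<noteq> x2\<close> by auto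
    with ST have "(S \<union> {x1}) \<union> T = V - {x2}" by auto
    moreover have "(S \<union> {x1}) \<inter> T = {}" using ST x1(1) by auto
    ultimately show ?thesis
      using ST(3,4) x1_only_S unfolding separation_def by auto
  qed
  have "{x2} \<subseteq> V" using x2(1) X(1) by auto
  then have "(\<forall>a\<in>S \<union> {x1}. \<not> E x2 a) \<or> (\<forall>b\<in>T. \<not> E x2 b)"
    using separator_vertex_one_sided[OF sg lo sep', where x = x2 and y = x2] by simp
  moreover have "\<exists>a\<in>S \<union> {x1}. E x2 a"
    using separator_touches_both_sides(1)[OF sg con sep'] by simp
  ultimately show False using x2(2,3) by blast
qed

theorem mainTheorem4:
  fixes V :: "'a set" and E :: "'a \<Rightarrow> 'a \<Rightarrow> bool"
  assumes "simple_graph V E"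
    and "connected_on V E"
    and "locally_ore V E"
    and "card V \<ge> 4"
  shows "k_connected 3 V E"
  unfolding k_connected_def
proof (intro conjI allI impI)
  show "card V > 3" using assms(4) by simp
  fix X assume X: "X \<subseteq> V" "card X < 3"
  have "finite X" using X(1) assms(1) finite_subset unfolding simple_graph_def by blast
  then have "card (V - X) > 0" using X assms(4) by (simp add: card_Diff_subset)
  then have "V - X \<noteq> {}" by (intro notI) simp
  show "connected_on (V - X) E"
  proof (rule ccontr)
    assume "\<not> connected_on (V - X) E"
    with \<open>V - X \<noteq> {}\<close> obtain S T where "separation (V - X) E S T"
      by (rule not_connected_on_separation)
    moreover have "card X \<le> 2" using X(2) by simp
    ultimately show False
      using locally_ore_no_separating_pair[OF assms(1-3) X(1) \<open>finite X\<close>] by simp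
  qed
qed

end
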